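(* Let $k\ge 2$, $\Sigma=\{\sigma_1,\dots,\sigma_k\}$, and let $R_k(z)=\sum_{\alpha\in\mathrm{RE}_{na}} z^{|\alpha|}$ be the generating function of the set $\mathrm{RE}_{na}$ defined below. Then $$[z^n]R_k(z) \sim \frac{\sqrt{\psi_k(\eta_k)}}{8\eta_k\sqrt{\pi}}\, n^{-3/2}\,\eta_k^{-n}\qquad (n\to\infty).$$
   Context: Regular expressions over $\Sigma$ are generated by $\beta := \varepsilon \mid \sigma\ (\sigma\in\Sigma) \mid (\beta+\beta) \mid (\beta\cdot\beta) \mid (\beta^\star)$ (the empty-set expression is not counted). The size $|\beta|$ is the number of occurrences of the symbols $\varepsilon$, letters, $+$, $\cdot$, $\star$ in $\beta$ (parentheses not counted). A $\Sigma$-star expression is an expression $(\tau^\star)$ where $\tau$ is a fully parenthesized union of the $k$ letters, each occurring exactly once, in any order and any bracketing; there are $C_k:=\frac{(2k-2)!}{(k-1)!}$ of them, each of size $2k$. $\mathrm{RE}_{na}$ is the set of regular expressions having no subexpression $(\beta_1+\beta_2)$ in which $\beta_1$ or $\beta_2$ is a $\Sigma$-star expression. Define the polynomials $p_k(z)=1-2z-(7+8k)z^2$, $h_k(z)=1-z-C_k z^{2k+1}$, and $\Delta_k(z)=p_k(z)+4z^{2k+1}C_k h_k(z)$. Let $\eta_k$ be the unique real root of $\Delta_k$ in the open interval $\left(0,\frac{1}{\sqrt{8+8k}}\right)$, and set $\psi_k(\eta_k):=-\eta_k\Delta_k'(\eta_k)$. $[z^n]F(z)$ denotes the coefficient of $z^n$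 in $F$, and $a_n\sim b_n$ means $a_n/b_n\to 1$. *)

theory Defs
  imports "HOL-Analysis.Analysis" "HOL-Library.Landau_Symbols"
begin

text \<open>Regular expressions; letters are natural numbers, the alphabet of size k is {0..<k}.\<close>
datatype rexp = Eps | Sym nat | Plus rexp rexp | Conc rexp rexp | Star rexp

fun rsize :: "rexp \<Rightarrow> nat" where
  "rsize Eps = 1"
| "rsize (Sym a) = 1"
| "rsize (Plus r s) = 1 + rsize r + rsize s"
| "rsize (Conc r s) = 1 + rsize r + rsize s"
| "rsize (Star r) = 1 + rsize r"

fun over :: "nat \<Rightarrow> rexp \<Rightarrow> bool" where
  "over k Eps = True"
| "over k (Sym a) = (a < k)"
| "over k (Plus r s) = (over k r \<and> over k s)"
| "over k (Conc r s) = (over k r \<and> over k s)"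
| "over k (Star r) = over k r"

text \<open>Unions of letters only (fully parenthesized, any bracketing).\<close>
fun letter_union :: "rexp \<Rightarrow> bool" where
  "letter_union (Sym a) = True"
| "letter_union (Plus r s) = (letter_union r \<and> letter_union s)"
| "letter_union _ = False"

fun letters :: "rexp \<Rightarrow> nat list" where
  "letters Eps = []"
| "letters (Sym a) = [a]"
| "letters (Plus r s) = letters r @ letters s"
| "letters (Conc r s) = letters r @ letters s"
| "letters (Star r) = letters r"

definition sigma_star :: "nat \<Rightarrow> rexp \<Rightarrow> bool" where
  "sigma_star k r \<longleftrightarrow> (\<exists>t. r = Star t \<and> letter_union t \<and> distinct (letters t)
                          \<and> set (letters t) = {0..<k})"

fun na :: "nat \<Rightarrow> rexp \<Rightarrow> bool" where
  "na k Eps = True"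
| "na k (Sym a) = True"
| "na k (Plus r s) = (\<not> sigma_star k r \<and> \<not> sigma_star k s \<and> na k r \<and> na k s)"
| "na k (Conc r s) = (na k r \<and> na k s)"
| "na k (Star r) = na k r"

definition RE_na :: "nat \<Rightarrow> rexp set" where
  "RE_na k = {r. over k r \<and> na k r}"

text \<open>[z^n] R_k(z): number of expressions in RE_na of size n.\<close>
definition coeffR :: "nat \<Rightarrow> nat \<Rightarrow> nat" where
  "coeffR k n = card {r \<in> RE_na k. rsize r = n}"

definition Ck :: "nat \<Rightarrow> real" where
  "Ck k = fact (2*k - 2) / fact (k - 1)"

definition pk :: "nat \<Rightarrow> real \<Rightarrow> real" where
  "pk k z = 1 - 2*z - (7 + 8 * real k) * z^2"

definition hk :: "nat \<Rightarrow> real \<Rightarrow> real" where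
  "hk k z = 1 - z - Ck k * z^(2*k+1)"

definition Delta :: "nat \<Rightarrow> real \<Rightarrow> real" where
  "Delta k z = pk k z + 4 * z^(2*k+1) * Ck k * hk k z"

definition eta :: "nat \<Rightarrow> real" where
  "eta k = (THE x. 0 < x \<and> x < 1 / sqrt (8 + 8 * real k) \<and> Delta k x = 0)"

definition psi :: "nat \<Rightarrow> real" where
  "psi k = - eta k * deriv (Delta k) (eta k)"

end

theory Submission
  imports Defs "HOL-Complex_Analysis.Complex_Analysis" "HOL-Real_Asymp.Real_Asymp"
begin

text \<open>
  Splitting an expression at its root operator shows that the generating function R of RE_na
  satisfies R = (k + 1) z + z R + z R^2 + z (R - C_k z^(2k))^2: the operands of a sum are exactly
  the expressions of RE_na that are not Sigma-star expressions, and there are C_k of those, all of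
  size 2k (stars of the labelled binary trees with k leaves). Hence
  S = 1 - z + 2 C_k z^(2k+1) - 4 z R satisfies S^2 = Delta_k and S(0) = 1.

  On [0, 1/sqrt(8 + 8k)] the polynomial Delta_k falls from 1 to a negative value, so it has the
  single root eta_k there, and Delta_k(z) = (1 - z/eta_k) Q(z) where Q(eta_k) = psi_k and Q has
  positive real part on a disc of radius larger than eta_k. So S = sqrt(1 - z/eta_k) sqrt(Q(z)) with
  sqrt(Q) analytic beyond eta_k, and Tannery's theorem turns this into
  [z^n] S ~ sqrt(psi_k) [z^n] sqrt(1 - z/eta_k) ~ - sqrt(psi_k) / (2 sqrt pi) n^(-3/2) eta_k^(-n).
  Since [z^(n+1)] S = -4 [z^n] R for n > 2k, this is the claim.
\<close>

section \<open>Coefficients of the square root\<close>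

definition sqrt_coeff :: "nat \<Rightarrow> real" where
  "sqrt_coeff m = ((1/2) gchoose m) * (-1) ^ m"

lemma sqrt_coeff_0 [simp]: "sqrt_coeff 0 = 1"
  by (simp add: sqrt_coeff_def)

lemma gbinomial_Suc_eq:
  fixes a :: "'a::field_char_0"
  shows "a gchoose Suc m = (a gchoose m) * (a - of_nat m) / of_nat (Suc m)"
proof -
  have "of_nat (Suc m) * (a gchoose Suc m) = (a gchoose m) * (a - of_nat m)"
    by (metis gbinomial_absorption gbinomial_absorb_comp mult.commute)
  then show ?thesis
    by (simp add: eq_divide_eq mult.commute del: of_nat_Suc)
qed

lemma sqrt_coeff_Suc: "sqrt_coeff (Suc m) = sqrt_coeff m * (real m - 1/2) / (real m + 1)"
  by (simp add: sqrt_coeff_def gbinomial_Suc_eq field_simps)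

lemma sqrt_coeff_convolution:
  "(\<Sum>j\<le>m. sqrt_coeff j * sqrt_coeff (m - j)) = (if m = 0 then 1 else if m = 1 then -1 else 0)"
proof -
  have "sqrt_coeff j * sqrt_coeff (m - j) = ((1/2::real) gchoose j) * ((1/2) gchoose (m - j)) * (-1) ^ m"
    if "j \<le> m" for j
  proof -
    have "(-1::real) ^ j * (-1) ^ (m - j) = (-1) ^ m"
      using that by (simp flip: power_add)
    then show ?thesis
      by (simp add: sqrt_coeff_def algebra_simps)
  qed
  then have "(\<Sum>j\<le>m. sqrt_coeff j * sqrt_coeff (m - j))
      = (\<Sum>j=0..m. ((1/2::real) gchoose j) * ((1/2) gchoose (m - j))) * (-1) ^ m"
    by (simp add: sum_distrib_right atMost_atLeast0)
  also have "\<dots> = ((1::real) gchoose m) * (-1) ^ m"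
    using gbinomial_Vandermonde[of "1/2::real" "1/2" m] by simp
  also have "((1::real) gchoose m) = of_nat (1 choose m)"
    using binomial_gbinomial[of 1 m, where 'a = real] by simp
  finally show ?thesis
    by (cases m) (auto simp: binomial_eq_0)
qed

lemma sqrt_coeff_nonzero: "sqrt_coeff m \<noteq> 0"
proof (induction m)
  case (Suc m)
  have "real m - 1/2 \<noteq> 0"
  proof
    assume "real m - 1/2 = 0"
    then have "real (2 * m) = 1"
      by simp
    then show False
      by (simp only: of_nat_eq_1_iff) presburger
  qed
  with Suc show ?case
    by (simp add: sqrt_coeff_Suc)
qed simp

lemma abs_sqrt_coeff_mult_square_mono:
  assumes "1 \<le> p" "p \<le> n"
  shows "\<bar>sqrt_coeff p\<bar> * real p ^ 2 \<le> \<bar>sqrt_coeff n\<bar> * real n ^ 2"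
  using assms(2)
proof (induction n rule: dec_induct)
  case (step n)
  have n: "1 \<le> real n"
    using step assms by simp
  have "\<bar>sqrt_coeff (Suc n)\<bar> = \<bar>sqrt_coeff n\<bar> * (real n - 1/2) / (real n + 1)"
    using n by (simp add: sqrt_coeff_Suc abs_mult abs_divide)
  then have "\<bar>sqrt_coeff (Suc n)\<bar> * real (Suc n) ^ 2
      = \<bar>sqrt_coeff n\<bar> * (real n - 1/2) / (real n + 1) * (real n + 1)^2"
    by simp
  also have "\<dots> = \<bar>sqrt_coeff n\<bar> * ((real n - 1/2) * (real n + 1))"
  proof -
    have "real n + 1 \<noteq> 0"
      by simp
    then show ?thesis
      by (simp add: power2_eq_square field_simps)
  qed
  also have "\<dots> \<ge> \<bar>sqrt_coeff n\<bar> * real n ^ 2"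
    using n by (intro mult_left_mono) (auto simp: power2_eq_square algebra_simps)
  finally show ?case
    using step by linarith
qed simp

lemma abs_sqrt_coeff_ratio_le:
  assumes "j \<le> n"
  shows "\<bar>sqrt_coeff (n - j) / sqrt_coeff n\<bar> \<le> 2 * (real j + 1)^2"
proof (cases "j < n")
  case True
  then have p: "1 \<le> n - j"
    by simp
  have "real j * 1 \<le> real j * real (n - j)"
    using p by (intro mult_left_mono) auto
  then have "real n \<le> (real j + 1) * real (n - j)"
    using True by (simp add: of_nat_diff algebra_simps)
  then have "real n ^ 2 \<le> ((real j + 1) * real (n - j)) ^ 2"
    by (intro power_mono) auto
  then have "\<bar>sqrt_coeff (n - j)\<bar> * real (n - j) ^ 2 \<le> (\<bar>sqrt_coeff n\<bar> * (real j + 1)^2) * real (n - j) ^ 2"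
    using abs_sqrt_coeff_mult_square_mono[OF p, of n] mult_left_mono[of _ _ "\<bar>sqrt_coeff n\<bar>"]
    by (fastforce simp: power_mult_distrib mult_ac)
  then have "\<bar>sqrt_coeff (n - j)\<bar> \<le> \<bar>sqrt_coeff n\<bar> * (real j + 1)^2"
    using p by (subst (asm) mult_le_cancel_right_pos) auto
  also have "\<dots> \<le> \<bar>sqrt_coeff n\<bar> * (2 * (real j + 1)^2)"
    by (intro mult_left_mono) auto
  finally show ?thesis
    using sqrt_coeff_nonzero[of n] by (simp add: abs_divide divide_le_eq mult.commute)
next
  case False
  with assms have "j = n"
    by simp
  show ?thesis
  proof (cases "n = 0")
    case False
    then have "\<bar>sqrt_coeff 1\<bar> * real 1 ^ 2 \<le> \<bar>sqrt_coeff n\<bar> * real n ^ 2"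
      by (intro abs_sqrt_coeff_mult_square_mono) auto
    then have "1 \<le> \<bar>sqrt_coeff n\<bar> * (2 * real n ^ 2)"
      by (simp add: sqrt_coeff_def)
    also have "\<dots> \<le> \<bar>sqrt_coeff n\<bar> * (2 * (real j + 1) ^ 2)"
      using \<open>j = n\<close> by (intro mult_left_mono) (auto intro!: power_mono)
    finally show ?thesis
      using \<open>j = n\<close> sqrt_coeff_nonzero[of n] by (simp add: abs_divide divide_le_eq mult.commute)
  qed (use \<open>j = n\<close> in simp)
qed

lemma Gamma_minus_half: "Gamma (-1/2 :: real) = - 2 * sqrt pi"
proof -
  have "(-1/2::real) \<notin> \<int>\<^sub>\<le>\<^sub>0"
  proof
    assume "(-1/2::real) \<in> \<int>\<^sub>\<le>\<^sub>0"
    then obtain n :: int where "(-1/2::real) = of_int n"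
      by (auto simp: nonpos_Ints_def)
    then have "real_of_int (2 * n) = -1"
      by simp
    then have "2 * n = -1"
      by linarith
    then show False
      by presburger
  qed
  then have "Gamma ((-1/2::real) + 1) = (-1/2) * Gamma (-1/2)"
    by (rule Gamma_plus1)
  then show ?thesis
    using Gamma_one_half_real by simp
qed

lemma sqrt_coeff_asymp_equiv:
  "sqrt_coeff \<sim>[at_top] (\<lambda>n. - 1 / (2 * sqrt pi) * real n powr (-3/2))"
proof (rule asymp_equivI'_const)
  have "(\<lambda>n. ((1/2::real) gchoose n) / ((-1)^n / exp ((1/2 + 1) * of_real (ln (real n)))))
      \<longlonglongrightarrow> inverse (Gamma (- (1/2)))"
    by (rule gbinomial_asymptotic)
  moreover have "inverse (Gamma (- (1/2::real))) = - 1 / (2 * sqrt pi)"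
    using Gamma_minus_half by (simp add: field_simps)
  moreover have "\<forall>\<^sub>F n in sequentially.
      ((1/2::real) gchoose n) / ((-1)^n / exp ((1/2 + 1) * of_real (ln (real n))))
      = sqrt_coeff n / real n powr (-3/2)"
    using eventually_gt_at_top[of "0::nat"]
  proof eventually_elim
    case (elim n)
    have "((-1::real) ^ n) * (-1) ^ n = 1"
      by (simp flip: power_mult_distrib)
    then show ?case
      using elim by (simp add: sqrt_coeff_def powr_def exp_minus field_simps)
  qed
  ultimately show "(\<lambda>n. sqrt_coeff n / real n powr (-3/2)) \<longlonglongrightarrow> - 1 / (2 * sqrt pi)"
    using Lim_transform_eventually by fastforce
qed simp

lemma sqrt_coeff_ratio_tendsto: "(\<lambda>n. sqrt_coeff (n - j) / sqrt_coeff n) \<longlonglongrightarrow> 1"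
proof -
  let ?c = "- 1 / (2 * sqrt pi)"
  have "(\<lambda>n. sqrt_coeff (n - j)) \<sim>[at_top] (\<lambda>n. ?c * real (n - j) powr (-3/2))"
    using asymp_equiv_compose'[OF sqrt_coeff_asymp_equiv filterlim_minus_const_nat_at_top] .
  also have "(\<lambda>n. ?c * real (n - j) powr (-3/2)) \<sim>[at_top] (\<lambda>n. ?c * real n powr (-3/2))"
  proof (rule asymp_equiv_mult)
    have "(\<lambda>n. real n - real j) \<sim>[at_top] (\<lambda>n. real n)"
      by real_asymp
    then have "(\<lambda>n. (real n - real j) powr (-3/2)) \<sim>[at_top] (\<lambda>n. real n powr (-3/2))"
      by (rule asymp_equiv_powr_real) (auto simp: eventually_at_top_linorder intro!: exI[of _ j])
    then show "(\<lambda>n. real (n - j) powr (-3/2)) \<sim>[at_top] (\<lambda>n. real n powr (-3/2))"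
      by (rule asymp_equiv_transfer)
        (auto simp: eventually_at_top_linorder of_nat_diff intro!: exI[of _ j])
  qed simp
  also have "(\<lambda>n. ?c * real n powr (-3/2)) \<sim>[at_top] sqrt_coeff"
    by (rule asymp_equiv_symI[OF sqrt_coeff_asymp_equiv])
  finally show ?thesis
    using sqrt_coeff_nonzero by (intro asymp_equivD_strong) auto
qed

lemma summable_square_mult_power:
  assumes "0 < q" "q < 1"
  shows "summable (\<lambda>j. (real j + 1)^2 * q ^ j)"
proof -
  have "(\<lambda>j. (real j + 1)^2 * sqrt q ^ j) \<longlonglongrightarrow> 0"
    using assms by real_asymp
  then have "\<forall>\<^sub>F j in sequentially. (real j + 1)^2 * sqrt q ^ j < 1"
    by (rule order_tendstoD(2)) simp
  then have "\<forall>\<^sub>F j in sequentially. norm ((real j + 1)^2 * q ^ j) \<le> sqrt q ^ j"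
  proof eventually_elim
    case (elim j)
    have "(real j + 1)^2 * q ^ j = sqrt q ^ j * ((real j + 1)^2 * sqrt q ^ j)"
      using assms(1) by (simp add: algebra_simps flip: power_mult_distrib)
    also have "\<dots> \<le> sqrt q ^ j * 1"
      using elim assms(1) by (intro mult_left_mono) auto
    finally show ?case
      using assms(1) by simp
  qed
  moreover have "summable (\<lambda>j. sqrt q ^ j)"
    using assms by (intro summable_geometric) auto
  ultimately show ?thesis
    by (rule summable_comparison_test_ev)
qed

lemma tendsto_sum_mult_sqrt_coeff_ratio:
  fixes a :: "nat \<Rightarrow> complex"
  assumes "0 < q" "q < 1" and a: "\<forall>\<^sub>F j in sequentially. norm (a j) \<le> q ^ j"
  shows "(\<lambda>n. \<Sum>j\<le>n. a j * of_real (sqrt_coeff (n - j) / sqrt_coeff n)) \<longlonglongrightarrow> suminf a"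
proof -
  obtain N where N: "\<And>j. N \<le> j \<Longrightarrow> norm (a j) \<le> q ^ j"
    using a by (auto simp: eventually_sequentially)
  define b where "b j n = (if j \<le> n then a j * of_real (sqrt_coeff (n - j) / sqrt_coeff n) else 0)" for j n
  define M where "M j = 2 * (real j + 1)^2 * q ^ j" for j
  have "(\<lambda>n. b j n) \<longlonglongrightarrow> a j" for j
  proof -
    have "(\<lambda>n. a j * of_real (sqrt_coeff (n - j) / sqrt_coeff n)) \<longlonglongrightarrow> a j * of_real 1"
      by (intro tendsto_intros sqrt_coeff_ratio_tendsto)
    moreover have "\<forall>\<^sub>F n in sequentially. a j * of_real (sqrt_coeff (n - j) / sqrt_coeff n) = b j n"
      using eventually_ge_at_top[of j] by eventually_elim (simp add: b_def)
    ultimately show ?thesis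
      using Lim_transform_eventually by fastforce
  qed
  moreover have "\<forall>\<^sub>F (j, n) in at_top \<times>\<^sub>F sequentially. norm (b j n) \<le> M j"
  proof -
    have "norm (b j n) \<le> M j" if "N \<le> j" for j n
    proof (cases "j \<le> n")
      case True
      have "norm (b j n) = norm (a j) * \<bar>sqrt_coeff (n - j) / sqrt_coeff n\<bar>"
        using True by (simp add: b_def norm_mult norm_divide)
      also have "\<dots> \<le> q ^ j * (2 * (real j + 1)^2)"
        using N[OF that] abs_sqrt_coeff_ratio_le[OF True] assms(1) by (intro mult_mono) auto
      finally show ?thesis
        by (simp add: M_def algebra_simps)
    qed (use assms(1) in \<open>simp add: b_def M_def\<close>)
    then show ?thesis
      unfolding eventually_prod_sequentially by auto
  qed
  moreover have "summable M"
    unfolding M_def mult.assoc using assms(1,2) by (intro summable_mult summable_square_mult_power)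
  ultimately have "(\<lambda>n. suminf (\<lambda>j. b j n)) \<longlonglongrightarrow> suminf a"
    using tannerys_theorem[of b a sequentially M] by simp
  moreover have "suminf (\<lambda>j. b j n) = (\<Sum>j\<le>n. a j * of_real (sqrt_coeff (n - j) / sqrt_coeff n))" for n
  proof -
    have "(\<lambda>j. b j n) sums (\<Sum>j\<le>n. b j n)"
      by (rule sums_finite) (auto simp: b_def)
    then show ?thesis
      by (simp add: sums_iff b_def)
  qed
  ultimately show ?thesis
    by simp
qed

section \<open>Counting unions of letters\<close>

lemma card_UN_image_times:
  fixes f :: "'a \<times> 'b \<Rightarrow> 'c"
  assumes "inj f" "finite I" "\<And>i. i \<in> I \<Longrightarrow> finite (X i)" "\<And>i. i \<in> I \<Longrightarrow> finite (Y i)"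
    and "\<And>i j. i \<in> I \<Longrightarrow> j \<in> I \<Longrightarrow> i \<noteq> j \<Longrightarrow> X i \<inter> X j = {}"
  shows "card (\<Union>i\<in>I. f ` (X i \<times> Y i)) = (\<Sum>i\<in>I. card (X i) * card (Y i))"
proof -
  have "f ` (X i \<times> Y i) \<inter> f ` (X j \<times> Y j) = {}" if "i \<in> I" "j \<in> I" "i \<noteq> j" for i j
    using assms(5)[OF that] assms(1) by (auto simp: inj_eq)
  then have "card (\<Union>i\<in>I. f ` (X i \<times> Y i)) = (\<Sum>i\<in>I. card (f ` (X i \<times> Y i)))"
    using assms(2-4) by (intro card_UN_disjoint) auto
  also have "\<dots> = (\<Sum>i\<in>I. card (X i) * card (Y i))"
    using assms(1) by (simp add: card_image inj_on_subset card_cartesian_product)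
  finally show ?thesis .
qed

lemma sum_Pow_card:
  fixes h :: "nat \<Rightarrow> 'a::comm_semiring_1"
  assumes "finite A"
  shows "(\<Sum>B\<in>Pow A. h (card B)) = (\<Sum>j\<le>card A. of_nat (card A choose j) * h j)"
proof -
  have "(\<Sum>B\<in>Pow A. h (card B)) = (\<Sum>j\<le>card A. \<Sum>B\<in>{B \<in> Pow A. card B = j}. h (card B))"
    by (rule sum.group[symmetric]) (use assms in \<open>auto intro: card_mono\<close>)
  also have "\<dots> = (\<Sum>j\<le>card A. of_nat (card A choose j) * h j)"
  proof (intro sum.cong refl)
    fix j
    have "{B \<in> Pow A. card B = j} = {B. B \<subseteq> A \<and> card B = j}"
      by auto
    then have "card {B \<in> Pow A. card B = j} = card A choose j"
      using n_subsets[OF assms, of j] by simp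
    then show "(\<Sum>B\<in>{B \<in> Pow A. card B = j}. h (card B)) = of_nat (card A choose j) * h j"
      by simp
  qed
  finally show ?thesis .
qed

definition letter_unions :: "nat set \<Rightarrow> rexp set" where
  "letter_unions A = {t. letter_union t \<and> distinct (letters t) \<and> set (letters t) = A}"

lemma letters_letter_union_nonempty: "letter_union t \<Longrightarrow> letters t \<noteq> []"
  by (induction t) auto

lemma rsize_letter_union: "letter_union t \<Longrightarrow> rsize t + 1 = 2 * length (letters t)"
  by (induction t) auto

lemma over_letter_union: "letter_union t \<Longrightarrow> over k t \<longleftrightarrow> (\<forall>a\<in>set (letters t). a < k)"
  by (induction t) auto

lemma na_letter_union: "letter_union t \<Longrightarrow> na k t"
  by (induction t) (auto simp: sigma_star_def)

lemma letter_unions_empty [simp]: "letter_unions {} = {}"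
  using letters_letter_union_nonempty by (auto simp: letter_unions_def)

lemma letter_unions_eq:
  "letter_unions A = (if card A = 1 then {Sym (the_elem A)} else {})
     \<union> (\<Union>B\<in>Pow A. (\<lambda>(r, s). Plus r s) ` (letter_unions B \<times> letter_unions (A - B)))"
  (is "_ = ?R")
proof
  show "letter_unions A \<subseteq> ?R"
  proof
    fix t assume t: "t \<in> letter_unions A"
    show "t \<in> ?R"
    proof (cases t)
      case (Plus r s)
      have "r \<in> letter_unions (set (letters r))" "s \<in> letter_unions (A - set (letters r))"
        using t Plus by (auto simp: letter_unions_def)
      moreover have "set (letters r) \<in> Pow A"
        using t Plus by (auto simp: letter_unions_def)
      ultimately show ?thesis using Plus by blast
    next
      case (Sym a)
      then show ?thesis using t by (auto simp: letter_unions_def)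
    qed (use t in \<open>auto simp: letter_unions_def\<close>)
  qed
  have "card A = 1 \<Longrightarrow> Sym (the_elem A) \<in> letter_unions A"
    by (auto simp: letter_unions_def card_Suc_eq)
  moreover have "Plus r s \<in> letter_unions A"
    if "B \<subseteq> A" "r \<in> letter_unions B" "s \<in> letter_unions (A - B)" for B r s
    using that by (auto simp: letter_unions_def)
  ultimately show "?R \<subseteq> letter_unions A" by auto
qed

lemma finite_letter_unions: "finite A \<Longrightarrow> finite (letter_unions A)"
proof (induction "card A" arbitrary: A rule: less_induct)
  case less
  have "finite (letter_unions B \<times> letter_unions (A - B))" if "B \<subseteq> A" for B
  proof (cases "B = {} \<or> B = A")
    case False
    with that have "B \<subset> A" "A - B \<subset> A" by auto
    with less.prems have "card B < card A" "card (A - B) < card A"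
      by (simp_all add: psubset_card_mono)
    moreover have "finite B" using that less.prems by (rule finite_subset)
    ultimately show ?thesis using less.hyps less.prems by simp
  next
    case True
    then show ?thesis by auto
  qed
  then show ?case
    using less.prems by (subst letter_unions_eq) simp
qed

lemma card_letter_unions_rec:
  assumes "finite A"
  shows "card (letter_unions A) = (if card A = 1 then 1 else 0)
           + (\<Sum>B\<in>Pow A. card (letter_unions B) * card (letter_unions (A - B)))"
proof -
  let ?U = "\<Union>B\<in>Pow A. (\<lambda>(r, s). Plus r s) ` (letter_unions B \<times> letter_unions (A - B))"
  have fin: "finite (letter_unions B)" if "B \<subseteq> A" for B
    using assms that by (meson finite_letter_unions finite_subset)
  have disj: "letter_unions B \<inter> letter_unions B' = {}" if "B \<noteq> B'" for B B'
    using that by (auto simp: letter_unions_def)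
  have card_U: "card ?U = (\<Sum>B\<in>Pow A. card (letter_unions B) * card (letter_unions (A - B)))"
    using assms by (intro card_UN_image_times) (simp_all add: inj_def fin disj)
  have "finite ?U"
    using assms by (simp add: fin)
  moreover have "Sym a \<notin> ?U" for a
    by auto
  ultimately have "card ((if card A = 1 then {Sym (the_elem A)} else {}) \<union> ?U)
      = (if card A = 1 then 1 else 0) + card ?U"
    by simp
  then show ?thesis
    using letter_unions_eq[of A] card_U by simp
qed

definition union_count :: "nat \<Rightarrow> real" where
  "union_count m = (if m = 0 then 0 else fact (2*m - 2) / fact (m - 1))"

lemma union_count_0 [simp]: "union_count 0 = 0"
  by (simp add: union_count_def)

lemma union_count_sqrt_coeff:
  "1 \<le> m \<Longrightarrow> union_count m = - fact m * 4 ^ m * sqrt_coeff m / 2"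
proof (induction m rule: dec_induct)
  case base
  then show ?case by (simp add: union_count_def sqrt_coeff_def)
next
  case (step m)
  have "union_count (Suc m) = union_count m * (4 * real m - 2)"
  proof -
    obtain n where m: "m = Suc n" using step.hyps by (cases m) auto
    have "union_count (Suc m) = fact (2 * m) / fact m"
      using step.hyps by (simp add: union_count_def)
    also have "fact (2 * m) = (real n + 1) * (2 * (2 * real n + 1) * fact (2 * n))"
      by (simp add: m algebra_simps)
    also have "fact m = (real n + 1) * (fact n :: real)"
      by (simp add: m)
    also have "(real n + 1) * (2 * (2 * real n + 1) * fact (2 * n)) / \<dots>
        = 2 * (2 * real n + 1) * fact (2 * n) / fact n"
      by (rule mult_divide_mult_cancel_left) simp
    finally show ?thesis
      by (simp add: union_count_def m field_simps)
  qed
  also have "\<dots> = - fact (Suc m) * 4 ^ Suc m * sqrt_coeff (Suc m) / 2"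
    by (simp add: step.IH sqrt_coeff_Suc field_simps)
  finally show ?case .
qed

lemma union_count_rec:
  assumes "2 \<le> m"
  shows "union_count m = (\<Sum>j\<le>m. real (m choose j) * union_count j * union_count (m - j))"
proof -
  define a where "a j = - (4 ^ j * sqrt_coeff j) / 2" for j
  define v where "v j = union_count j / fact j" for j
  have v: "v j = a j + (if j = 0 then 1/2 else 0)" for j
    by (cases "j = 0") (simp_all add: a_def v_def union_count_sqrt_coeff)
  have "(\<Sum>j\<le>m. a j * a (m - j)) = 4 ^ m / 4 * (\<Sum>j\<le>m. sqrt_coeff j * sqrt_coeff (m - j))"
    by (simp add: a_def sum_distrib_left power_add[symmetric] algebra_simps)
  also have "\<dots> = 0"
    using assms by (simp add: sqrt_coeff_convolution)
  finally have aa: "(\<Sum>j\<le>m. a j * a (m - j)) = 0" .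
  have "v j * v (m - j) = a j * a (m - j) + (if j = 0 then a m / 2 else 0) + (if j = m then a m / 2 else 0)"
    if "j \<le> m" for j
    using assms that by (auto simp: v algebra_simps)
  then have "(\<Sum>j\<le>m. v j * v (m - j)) = (\<Sum>j\<le>m. a j * a (m - j)) + a m / 2 + a m / 2"
    by (simp add: sum.distrib)
  also have "\<dots> = v m"
    using assms by (simp add: aa v)
  finally have vm: "v m = (\<Sum>j\<le>m. v j * v (m - j))" ..
  have "union_count m = fact m * v m"
    by (simp add: v_def)
  also have "\<dots> = (\<Sum>j\<le>m. real (m choose j) * union_count j * union_count (m - j))"
    unfolding vm sum_distrib_left
    by (intro sum.cong refl) (simp add: v_def binomial_fact)
  finally show ?thesis .
qed

lemma card_letter_unions: "finite A \<Longrightarrow> real (card (letter_unions A)) = union_count (card A)"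
proof (induction "card A" arbitrary: A rule: less_induct)
  case less
  let ?m = "card A"
  have parts: "real (card (letter_unions B)) * real (card (letter_unions (A - B)))
      = union_count (card B) * union_count (?m - card B)" if "B \<subseteq> A" for B
  proof (cases "B = {} \<or> B = A")
    case True
    then show ?thesis by (auto simp: union_count_def)
  next
    case False
    with that have "B \<subset> A" "A - B \<subset> A" by auto
    with less.prems have "card B < ?m" "card (A - B) < ?m"
      by (simp_all add: psubset_card_mono)
    moreover have "finite B" using that less.prems by (rule finite_subset)
    moreover have "card (A - B) = ?m - card B"
      using that \<open>finite B\<close> by (simp add: card_Diff_subset)
    ultimately show ?thesis using less.hyps less.prems by simp
  qed
  have "real (card (letter_unions A))
      = (if ?m = 1 then 1 else 0) + (\<Sum>B\<in>Pow A. union_count (card B) * union_count (?m - card B))"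
    using less.prems parts by (simp add: card_letter_unions_rec)
  also have "\<dots> = (if ?m = 1 then 1 else 0)
      + (\<Sum>j\<le>?m. real (?m choose j) * (union_count j * union_count (?m - j)))"
    using sum_Pow_card[OF less.prems, of "\<lambda>j. union_count j * union_count (?m - j)"] by simp
  also have "\<dots> = union_count ?m"
  proof (cases "?m \<le> 1")
    case True
    then show ?thesis
      by (cases ?m) (auto simp: union_count_def)
  next
    case False
    then show ?thesis
      by (simp add: union_count_rec mult.assoc)
  qed
  finally show ?case .
qed

lemma card_sigma_star: "1 \<le> k \<Longrightarrow> real (card (Collect (sigma_star k))) = Ck k"
proof -
  assume "1 \<le> k"
  have "Collect (sigma_star k) = Star ` letter_unions {0..<k}"
    by (auto simp: sigma_star_def letter_unions_def)
  then have "card (Collect (sigma_star k)) = card (letter_unions {0..<k})"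
    by (simp add: card_image inj_on_def)
  with \<open>1 \<le> k\<close> show ?thesis
    by (simp add: card_letter_unions union_count_def Ck_def)
qed

section \<open>The generating function of RE_na\<close>

definition RE_na_of_size :: "nat \<Rightarrow> nat \<Rightarrow> rexp set" where
  "RE_na_of_size k n = {r \<in> RE_na k. rsize r = n}"

definition plus_operands :: "nat \<Rightarrow> nat \<Rightarrow> rexp set" where
  "plus_operands k n = {r \<in> RE_na_of_size k n. \<not> sigma_star k r}"

lemma rsize_pos: "0 < rsize r"
  by (induction r) simp_all

lemma RE_na_of_size_0: "RE_na_of_size k 0 = {}"
  using rsize_pos by (simp add: RE_na_of_size_def)

lemma RE_na_of_size_Suc:
  "RE_na_of_size k (Suc m) =
     (if m = 0 then insert Eps (Sym ` {..<k}) else {})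
     \<union> Star ` RE_na_of_size k m
     \<union> (\<Union>i\<le>m. (\<lambda>(r, s). Conc r s) ` (RE_na_of_size k i \<times> RE_na_of_size k (m - i)))
     \<union> (\<Union>i\<le>m. (\<lambda>(r, s). Plus r s) ` (plus_operands k i \<times> plus_operands k (m - i)))"
  (is "?L = ?R")
proof
  show "?L \<subseteq> ?R"
  proof
    fix r assume r: "r \<in> ?L"
    show "r \<in> ?R"
    proof (cases r)
      case (Conc t u)
      then have "t \<in> RE_na_of_size k (rsize t)" "u \<in> RE_na_of_size k (m - rsize t)" "rsize t \<le> m"
        using r by (auto simp: RE_na_of_size_def RE_na_def)
      then show ?thesis using Conc by blast
    next
      case (Plus t u)
      then have "t \<in> plus_operands k (rsize t)" "u \<in> plus_operands k (m - rsize t)" "rsize t \<le> m"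
        using r by (auto simp: RE_na_of_size_def RE_na_def plus_operands_def)
      then show ?thesis using Plus by blast
    qed (use r in \<open>auto simp: RE_na_of_size_def RE_na_def\<close>)
  qed
  show "?R \<subseteq> ?L"
    by (auto simp: RE_na_of_size_def RE_na_def plus_operands_def split: if_splits)
qed

lemma finite_RE_na_of_size: "finite (RE_na_of_size k n)"
proof (induction n rule: less_induct)
  case (less n)
  show ?case
  proof (cases n)
    case 0
    then show ?thesis by (simp add: RE_na_of_size_0)
  next
    case (Suc m)
    then have "finite (RE_na_of_size k i)" "finite (plus_operands k i)" if "i \<le> m" for i
      using less that by (simp_all add: plus_operands_def)
    then show ?thesis
      unfolding Suc RE_na_of_size_Suc by simp
  qed
qed

lemma finite_plus_operands: "finite (plus_operands k n)"
  using finite_RE_na_of_size by (simp add: plus_operands_def)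

lemma card_RE_na_of_size_Suc:
  "card (RE_na_of_size k (Suc m)) =
     (if m = 0 then k + 1 else 0) + card (RE_na_of_size k m)
     + (\<Sum>i\<le>m. card (RE_na_of_size k i) * card (RE_na_of_size k (m - i)))
     + (\<Sum>i\<le>m. card (plus_operands k i) * card (plus_operands k (m - i)))"
proof -
  let ?A = "if m = 0 then insert Eps (Sym ` {..<k}) else {}"
  let ?B = "Star ` RE_na_of_size k m"
  let ?C = "\<Union>i\<le>m. (\<lambda>(r, s). Conc r s) ` (RE_na_of_size k i \<times> RE_na_of_size k (m - i))"
  let ?D = "\<Union>i\<le>m. (\<lambda>(r, s). Plus r s) ` (plus_operands k i \<times> plus_operands k (m - i))"
  have "card (insert Eps (Sym ` {..<k})) = k + 1"
    by (subst card_insert_disjoint) (auto simp: card_image inj_on_def)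
  then have card_A: "card ?A = (if m = 0 then k + 1 else 0)"
    by simp
  have card_B: "card ?B = card (RE_na_of_size k m)"
    by (simp add: card_image inj_on_def)
  have disj_E: "RE_na_of_size k i \<inter> RE_na_of_size k j = {}" if "i \<noteq> j" for i j
    using that by (auto simp: RE_na_of_size_def)
  then have disj_P: "plus_operands k i \<inter> plus_operands k j = {}" if "i \<noteq> j" for i j
    using that by (auto simp: plus_operands_def)
  have card_C: "card ?C = (\<Sum>i\<le>m. card (RE_na_of_size k i) * card (RE_na_of_size k (m - i)))"
    by (rule card_UN_image_times) (simp_all add: inj_def finite_RE_na_of_size disj_E)
  have card_D: "card ?D = (\<Sum>i\<le>m. card (plus_operands k i) * card (plus_operands k (m - i)))"
    by (rule card_UN_image_times) (simp_all add: inj_def finite_plus_operands disj_P)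
  have "finite ?A" "finite ?B" "finite ?C" "finite ?D"
    by (simp_all add: finite_RE_na_of_size finite_plus_operands)
  moreover have "?A \<inter> ?B = {}" "(?A \<union> ?B) \<inter> ?C = {}" "(?A \<union> ?B \<union> ?C) \<inter> ?D = {}"
    by auto
  ultimately have "card (?A \<union> ?B \<union> ?C \<union> ?D) = card ?A + card ?B + card ?C + card ?D"
    by (simp add: card_Un_disjoint)
  then show ?thesis
    unfolding RE_na_of_size_Suc card_A card_B card_C card_D .
qed

lemma sigma_star_RE_na_of_size:
  assumes "sigma_star k r"
  shows "r \<in> RE_na_of_size k n \<longleftrightarrow> n = 2 * k"
proof -
  obtain t where t: "r = Star t" "letter_union t" "distinct (letters t)" "set (letters t) = {0..<k}"
    using assms by (auto simp: sigma_star_def)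
  then have "length (letters t) = k"
    using distinct_card[of "letters t"] by simp
  with t show ?thesis
    using rsize_letter_union[of t] over_letter_union[of t k] na_letter_union[of t k]
    by (auto simp: RE_na_of_size_def RE_na_def)
qed

definition ogf :: "(nat \<Rightarrow> 'a set) \<Rightarrow> complex fps" where
  "ogf E = Abs_fps (\<lambda>n. of_nat (card (E n)))"

lemma ogf_RE_na_of_size_nth: "ogf (RE_na_of_size k) $ n = of_nat (coeffR k n)"
  by (simp add: ogf_def coeffR_def RE_na_of_size_def)

lemma ogf_RE_na_of_size_eq:
  fixes k :: nat
  defines "R \<equiv> ogf (RE_na_of_size k)" and "P \<equiv> ogf (plus_operands k)"
  shows "R = of_nat (k + 1) * fps_X + fps_X * R + fps_X * R^2 + fps_X * P^2"
proof (rule fps_ext)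
  fix n
  show "R $ n = (of_nat (k + 1) * fps_X + fps_X * R + fps_X * R^2 + fps_X * P^2) $ n"
  proof (cases n)
    case 0
    then show ?thesis by (simp add: R_def ogf_def RE_na_of_size_0)
  next
    case (Suc m)
    have "(of_nat (k + 1) * fps_X + fps_X * R + fps_X * R^2 + fps_X * P^2) $ Suc m
        = (if m = 0 then of_nat (k + 1) else 0) + R $ m + (R * R) $ m + (P * P) $ m"
      by (simp add: power2_eq_square flip: fps_of_nat)
    also have "\<dots> = R $ Suc m"
      by (simp add: R_def P_def ogf_def card_RE_na_of_size_Suc fps_mult_nth atMost_atLeast0)
    finally show ?thesis
      using Suc by simp
  qed
qed

lemma ogf_plus_operands:
  assumes "1 \<le> k"
  shows "ogf (plus_operands k) = ogf (RE_na_of_size k) - fps_const (of_real (Ck k)) * fps_X ^ (2 * k)"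
proof (rule fps_ext)
  fix n
  define S where "S = (if n = 2 * k then Collect (sigma_star k) else {})"
  have "r \<in> RE_na_of_size k n \<longleftrightarrow> r \<in> plus_operands k n \<or> r \<in> S" for r
    by (cases "sigma_star k r") (simp_all add: plus_operands_def S_def sigma_star_RE_na_of_size)
  then have E: "RE_na_of_size k n = plus_operands k n \<union> S"
    by blast
  have "plus_operands k n \<inter> S = {}"
    by (simp add: plus_operands_def S_def disjoint_iff)
  moreover have "finite S"
    using finite_RE_na_of_size[of k n] unfolding E by simp
  ultimately have "card (RE_na_of_size k n) = card (plus_operands k n) + card S"
    unfolding E by (simp add: card_Un_disjoint finite_plus_operands)
  moreover have "real (card S) = (if n = 2 * k then Ck k else 0)"
    using card_sigma_star[OF assms] by (simp add: S_def)
  ultimately have "real (card (RE_na_of_size k n)) = card (plus_operands k n) + (if n = 2 * k then Ck k else 0)"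
    by simp
  then have "(of_nat (card (RE_na_of_size k n)) :: complex)
      = of_nat (card (plus_operands k n)) + of_real (if n = 2 * k then Ck k else 0)"
    by (metis of_real_add of_real_of_nat_eq)
  moreover have "(fps_const (of_real (Ck k)) * fps_X ^ (2 * k) :: complex fps) $ n
      = of_real (if n = 2 * k then Ck k else 0)"
    by (simp add: fps_X_power_nth)
  ultimately show "ogf (plus_operands k) $ n
      = (ogf (RE_na_of_size k) - fps_const (of_real (Ck k)) * fps_X ^ (2 * k)) $ n"
    by (simp add: ogf_def)
qed

section \<open>The discriminant\<close>

definition pow_diff_quot :: "nat \<Rightarrow> 'a::comm_ring_1 \<Rightarrow> 'a \<Rightarrow> 'a" where
  "pow_diff_quot n z e = (\<Sum>i<n. e ^ (n - Suc i) * z ^ i)"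

lemma power_diff_eq_pow_diff_quot: "z ^ n - e ^ n = (z - e) * pow_diff_quot n z e"
  unfolding pow_diff_quot_def by (rule power_diff_sumr2)

lemma norm_pow_diff_quot_le:
  fixes z e :: "'a::real_normed_field"
  assumes "norm z \<le> r" "norm e \<le> r"
  shows "norm (pow_diff_quot n z e) \<le> real n * r ^ (n - 1)"
proof -
  have "norm (pow_diff_quot n z e) \<le> (\<Sum>i<n. norm (e ^ (n - Suc i) * z ^ i))"
    unfolding pow_diff_quot_def by (rule norm_sum)
  also have "\<dots> \<le> (\<Sum>i<n. r ^ (n - 1))"
  proof (intro sum_mono)
    fix i assume "i \<in> {..<n}"
    then have "n - Suc i + i = n - 1" by auto
    have "norm (e ^ (n - Suc i) * z ^ i) = norm e ^ (n - Suc i) * norm z ^ i"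
      by (simp add: norm_mult norm_power)
    also have "\<dots> \<le> r ^ (n - Suc i) * r ^ i"
      using assms order.trans[OF norm_ge_zero assms(1)] by (intro mult_mono power_mono) auto
    also have "\<dots> = r ^ (n - 1)"
      using \<open>n - Suc i + i = n - 1\<close> by (simp flip: power_add)
    finally show "norm (e ^ (n - Suc i) * z ^ i) \<le> r ^ (n - 1)" .
  qed
  finally show ?thesis by simp
qed

definition discr :: "nat \<Rightarrow> 'a::comm_ring_1 \<Rightarrow> 'a \<Rightarrow> 'a" where
  "discr k c z = 1 - 2*z - (7 + 8 * of_nat k) * z^2 + 4 * z^(2*k+1) * c * (1 - z - c * z^(2*k+1))"

definition discr_quot_high :: "nat \<Rightarrow> 'a::comm_ring_1 \<Rightarrow> 'a \<Rightarrow> 'a \<Rightarrow> 'a" where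
  "discr_quot_high k c e z = 4 * c * (pow_diff_quot (2*k+1) z e - pow_diff_quot (2*k+2) z e
     - c * pow_diff_quot (4*k+2) z e)"

definition discr_quot :: "nat \<Rightarrow> 'a::comm_ring_1 \<Rightarrow> 'a \<Rightarrow> 'a \<Rightarrow> 'a" where
  "discr_quot k c e z = -2 - (7 + 8 * of_nat k) * (z + e) + discr_quot_high k c e z"

lemma Delta_eq_discr: "Delta k = discr k (Ck k)"
  by (auto simp: Delta_def pk_def hk_def discr_def fun_eq_iff algebra_simps)

lemma discr_expand:
  "discr k c z = 1 - 2*z - (7 + 8 * of_nat k) * z^2 + 4 * c * z^(2*k+1)
     - 4 * c * z^(2*k+2) - 4 * c * c * z^(4*k+2)"
proof -
  have "4*k+2 = (2*k+1) + (2*k+1)"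
    by simp
  then have p1: "z^(2*k+1) * z^(2*k+1) = z^(4*k+2)"
    by (simp only: power_add)
  have p2: "z^(2*k+1) * z = z^(2*k+2)"
    by simp
  have "4 * z^(2*k+1) * c * (1 - z - c * z^(2*k+1))
      = 4*c*z^(2*k+1) - 4*c*(z^(2*k+1)*z) - 4*c*c*(z^(2*k+1)*z^(2*k+1))"
    by (simp add: algebra_simps)
  then show ?thesis
    unfolding discr_def p1 p2 by simp
qed

lemma discr_diff: "discr k c z - discr k c e = (z - e) * discr_quot k c e z"
proof -
  have "discr k c z - discr k c e = -2 * (z - e) - (7 + 8 * of_nat k) * (z^2 - e^2)
     + 4 * c * (z^(2*k+1) - e^(2*k+1)) - 4 * c * (z^(2*k+2) - e^(2*k+2))
     - 4 * c * c * (z^(4*k+2) - e^(4*k+2))"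
    unfolding discr_expand by (simp add: algebra_simps)
  also have "z^2 - e^2 = (z - e) * (z + e)"
    by (simp add: power2_eq_square algebra_simps)
  finally show ?thesis
    unfolding power_diff_eq_pow_diff_quot discr_quot_def discr_quot_high_def
    by (simp add: algebra_simps)
qed

lemma discr_of_real:
  "discr k (of_real c) (of_real z) = (of_real (discr k c z) :: 'a::{real_algebra_1, comm_ring_1})"
  by (simp add: discr_def)

lemma discr_fps_const: "discr k (fps_const c) (fps_const z) = fps_const (discr k c z)"
  unfolding discr_def
  by (simp only: fps_const_sub[symmetric] fps_const_add[symmetric] fps_const_mult[symmetric]
      fps_const_power[symmetric] fps_const_1_eq_1[symmetric] fps_numeral_fps_const fps_of_nat[symmetric])

lemma discr_eq_square_if_quadratic:
  fixes x r c :: "'a::comm_ring_1"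
  assumes "r = of_nat (k + 1) * x + x * r + x * r^2 + x * (r - c * x ^ (2*k))^2"
  shows "(1 - x + 2 * c * x ^ (2*k+1) - 4 * x * r)^2 = discr k c x"
proof -
  define y where "y = x ^ (2*k)"
  have "x ^ (2*k+1) = x * y"
    by (simp add: y_def)
  then have "(1 - x + 2 * c * x ^ (2*k+1) - 4 * x * r)^2 - discr k c x
      = 8 * x * (of_nat (k + 1) * x + x * r + x * r^2 + x * (r - c * x ^ (2*k))^2 - r)"
    unfolding discr_def y_def[symmetric] by (simp add: power2_eq_square algebra_simps)
  then show ?thesis
    using assms by simp
qed

section \<open>The root of the discriminant\<close>

definition eta_bound :: "nat \<Rightarrow> real" where
  "eta_bound k = 1 / sqrt (8 + 8 * real k)"

lemma eta_bound_pos: "0 < eta_bound k"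
  by (simp add: eta_bound_def)

lemma eta_bound_sq: "eta_bound k ^ 2 = 1 / (8 + 8 * real k)"
  by (simp add: eta_bound_def power_divide)

lemma eta_bound_le: "1 \<le> k \<Longrightarrow> eta_bound k \<le> 1/4"
proof -
  assume "1 \<le> k"
  then have "(1::real) / (8 + 8 * real k) \<le> 1/16"
    by (intro divide_left_mono) auto
  then have "eta_bound k ^ 2 \<le> (1/4) ^ 2"
    unfolding eta_bound_sq by (simp add: power2_eq_square)
  then show ?thesis
    by (rule power2_le_imp_le) simp
qed

lemma fact_add_le_power: "fact (m + n) \<le> real (m + n) ^ n * fact m"
proof (induction n)
  case (Suc n)
  have "fact (m + Suc n) = real (m + Suc n) * fact (m + n)"
    by simp
  also have "\<dots> \<le> real (m + Suc n) * (real (m + n) ^ n * fact m)"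
    using Suc by (intro mult_left_mono) auto
  also have "\<dots> \<le> real (m + Suc n) * (real (m + Suc n) ^ n * fact m)"
    by (intro mult_left_mono mult_right_mono power_mono) auto
  finally show ?case
    by simp
qed simp

lemma Ck_pos: "0 < Ck k"
  by (simp add: Ck_def)

lemma Ck_le_power:
  assumes "1 \<le> k"
  shows "Ck k \<le> (2 * real k) ^ (k - 1)"
proof -
  have "2*k - 2 = (k - 1) + (k - 1)"
    using assms by simp
  then have "fact (2*k - 2) = (fact ((k - 1) + (k - 1)) :: real)"
    by simp
  also have "\<dots> \<le> real ((k - 1) + (k - 1)) ^ (k - 1) * fact (k - 1)"
    by (rule fact_add_le_power)
  also have "\<dots> \<le> (2 * real k) ^ (k - 1) * fact (k - 1)"
    using assms by (intro mult_right_mono power_mono) auto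
  finally show ?thesis
    unfolding Ck_def by (simp add: divide_le_eq)
qed

lemma Ck_mult_le_power:
  assumes "2 \<le> k"
  shows "Ck k * (32 * (real k + 1)) \<le> (8 + 8 * real k) ^ k"
proof -
  have "(4::real) \<le> 4 ^ (k - 1)"
    using power_increasing[of 1 "k - 1" "4::real"] assms by simp
  then have "4 * (2 * real k) ^ (k - 1) \<le> 4 ^ (k - 1) * (2 * real k) ^ (k - 1)"
    by (intro mult_right_mono) auto
  also have "\<dots> = (4 * (2 * real k)) ^ (k - 1)"
    by (rule power_mult_distrib[symmetric])
  also have "\<dots> \<le> (8 + 8 * real k) ^ (k - 1)"
    by (intro power_mono) auto
  finally have bound: "4 * (2 * real k) ^ (k - 1) \<le> (8 + 8 * real k) ^ (k - 1)" .
  have "Ck k * (32 * (real k + 1)) \<le> (2 * real k) ^ (k - 1) * (32 * (real k + 1))"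
    using Ck_le_power[of k] assms by (intro mult_right_mono) auto
  also have "\<dots> = (8 + 8 * real k) * (4 * (2 * real k) ^ (k - 1))"
    by (simp only: distrib_left distrib_right mult_ac)
  also have "\<dots> \<le> (8 + 8 * real k) * (8 + 8 * real k) ^ (k - 1)"
    using bound by (intro mult_left_mono) auto
  also have "\<dots> = (8 + 8 * real k) ^ k"
    using assms by (simp flip: power_Suc)
  finally show ?thesis .
qed

lemma Ck_eta_bound_power_le:
  assumes "2 \<le> k"
  shows "Ck k * eta_bound k ^ (2*k) \<le> 1 / (32 * (real k + 1))"
proof -
  have "eta_bound k ^ (2*k) = 1 / (8 + 8 * real k) ^ k"
    by (simp add: power_mult eta_bound_sq power_one_over)
  then have "Ck k * eta_bound k ^ (2*k)
      = Ck k * (32 * (real k + 1)) / ((8 + 8 * real k) ^ k * (32 * (real k + 1)))"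
    by simp
  also have "\<dots> \<le> (8 + 8 * real k) ^ k / ((8 + 8 * real k) ^ k * (32 * (real k + 1)))"
    by (intro divide_right_mono Ck_mult_le_power assms) simp
  also have "\<dots> = 1 / (32 * (real k + 1))"
    by simp
  finally show ?thesis .
qed

lemma norm_discr_quot_high_bound:
  fixes z w :: "'a::real_normed_field"
  assumes "0 \<le> c" "norm z \<le> x" "norm w \<le> x"
  shows "norm (discr_quot_high k (of_real c) w z)
    \<le> 4 * (c * x ^ (2*k)) * (real (2*k+1) + real (2*k+2) * x + (c * x ^ (2*k)) * real (4*k+2) * x)"
proof -
  let ?P = "\<lambda>n. pow_diff_quot n z w"
  have "norm (discr_quot_high k (of_real c) w z) \<le> 4 * c * (norm (?P (2*k+1)) + norm (?P (2*k+2)) + c * norm (?P (4*k+2)))"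
  proof -
    have "norm (?P (2*k+1) - ?P (2*k+2) - of_real c * ?P (4*k+2))
        \<le> norm (?P (2*k+1)) + norm (?P (2*k+2)) + c * norm (?P (4*k+2))"
      using norm_triangle_ineq4[of "?P (2*k+1) - ?P (2*k+2)" "of_real c * ?P (4*k+2)"]
        norm_triangle_ineq4[of "?P (2*k+1)" "?P (2*k+2)"] assms(1)
      by (simp add: norm_mult)
    then show ?thesis
      unfolding discr_quot_high_def using assms(1) by (simp add: norm_mult mult_left_mono)
  qed
  also have "\<dots> \<le> 4 * c * (real (2*k+1) * x ^ (2*k) + real (2*k+2) * x ^ (2*k+1) + c * (real (4*k+2) * x ^ (4*k+1)))"
    using assms norm_pow_diff_quot_le[OF assms(2,3), of "2*k+1"]
      norm_pow_diff_quot_le[OF assms(2,3), of "2*k+2"] norm_pow_diff_quot_le[OF assms(2,3), of "4*k+2"]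
    by (intro mult_left_mono add_mono) simp_all
  also have "\<dots> = 4 * (c * x ^ (2*k)) * (real (2*k+1) + real (2*k+2) * x + (c * x ^ (2*k)) * real (4*k+2) * x)"
  proof -
    have "4*k+1 = 2*k + 2*k + 1"
      by simp
    then have "x ^ (4*k+1) = x ^ (2*k) * x ^ (2*k) * x"
      by (simp only: power_add power_one_right)
    moreover have "x ^ (2*k+1) = x ^ (2*k) * x"
      by simp
    ultimately show ?thesis
      by (simp only:) (simp add: algebra_simps)
  qed
  finally show ?thesis .
qed

lemma norm_discr_quot_high_le:
  fixes z w :: "'a::real_normed_field"
  assumes k: "2 \<le> k" and "norm z \<le> eta_bound k" "norm w \<le> eta_bound k"
  shows "norm (discr_quot_high k (of_real (Ck k)) w z) \<le> 1/2"
proof -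
  define x where "x = eta_bound k"
  define \<epsilon> where "\<epsilon> = Ck k * x ^ (2*k)"
  have x: "0 < x" "x \<le> 1/4"
    using eta_bound_pos eta_bound_le k by (auto simp: x_def)
  have "0 \<le> \<epsilon>"
    using x Ck_pos[of k] by (simp add: \<epsilon>_def)
  have \<epsilon>: "\<epsilon> * (32 * (real k + 1)) \<le> 1"
    using Ck_eta_bound_power_le[OF k] by (simp add: \<epsilon>_def x_def field_simps)
  have "4 * \<epsilon> * real (2*k+1) \<le> 1/4" "4 * \<epsilon> * real (2*k+2) \<le> 1/4" "4 * \<epsilon> * \<epsilon> * real (4*k+2) \<le> 1/4"
  proof -
    show "4 * \<epsilon> * real (2*k+1) \<le> 1/4" "4 * \<epsilon> * real (2*k+2) \<le> 1/4"
      using \<epsilon> \<open>0 \<le> \<epsilon>\<close> by (simp_all add: algebra_simps)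
    have "\<epsilon> \<le> 1/96"
      using \<epsilon> \<open>0 \<le> \<epsilon>\<close> k mult_left_mono[of 96 "32 * (real k + 1)" \<epsilon>] by simp
    moreover have "4 * \<epsilon> * real (4*k+2) \<le> 1/2"
      using \<epsilon> \<open>0 \<le> \<epsilon>\<close> by (simp add: algebra_simps)
    ultimately have "\<epsilon> * (4 * \<epsilon> * real (4*k+2)) \<le> 1/96 * (1/2)"
      using \<open>0 \<le> \<epsilon>\<close> by (intro mult_mono) auto
    then show "4 * \<epsilon> * \<epsilon> * real (4*k+2) \<le> 1/4"
      by (simp add: algebra_simps)
  qed
  then have "4 * \<epsilon> * real (2*k+1) + (4 * \<epsilon> * real (2*k+2)) * x + (4 * \<epsilon> * \<epsilon> * real (4*k+2)) * x
      \<le> 1/4 + 1/4 * x + 1/4 * x"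
    using x by (intro add_mono mult_right_mono) auto
  then have "4 * \<epsilon> * (real (2*k+1) + real (2*k+2) * x + \<epsilon> * real (4*k+2) * x) \<le> 1/4 + 1/4 * x + 1/4 * x"
    by (simp add: algebra_simps)
  also have "\<dots> \<le> 1/2"
    using x by simp
  finally show ?thesis
    using norm_discr_quot_high_bound[of "Ck k" z x w k] Ck_pos[of k] assms
    by (simp add: x_def \<epsilon>_def)
qed

lemma discr_quot_neg:
  assumes k: "2 \<le> k" and "0 \<le> x" "x \<le> eta_bound k" "0 \<le> y" "y \<le> eta_bound k"
  shows "discr_quot k (Ck k) x y < 0"
proof -
  have "norm (discr_quot_high k (of_real (Ck k)) x y) \<le> 1/2"
    by (rule norm_discr_quot_high_le[OF k]) (use assms in auto)
  then have "discr_quot_high k (Ck k) x y \<le> 1/2"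
    by simp
  moreover have "0 \<le> (7 + 8 * real k) * (y + x)"
    using assms by simp
  ultimately show ?thesis
    unfolding discr_quot_def by simp
qed

lemma discr_strict_antimono:
  assumes k: "2 \<le> k" and "0 \<le> x" "x < y" "y \<le> eta_bound k"
  shows "discr k (Ck k) y < discr k (Ck k) x"
proof -
  have "(y - x) * discr_quot k (Ck k) x y < 0"
    using discr_quot_neg[OF k, of x y] assms by (simp add: mult_pos_neg)
  then show ?thesis
    using discr_diff[of k "Ck k" y x] by simp
qed

lemma isCont_discr: "isCont (discr k c) (x::real)"
  unfolding discr_def by (intro continuous_intros)

lemma isCont_discr_quot: "isCont (discr_quot k c e) (x::real)"
  unfolding discr_quot_def discr_quot_high_def pow_diff_quot_def by (intro continuous_intros)

lemma discr_0 [simp]: "discr k c 0 = 1"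
  by (simp add: discr_def)

lemma discr_eta_bound_neg:
  assumes k: "2 \<le> k"
  shows "discr k (Ck k) (eta_bound k) < 0"
proof -
  define x where "x = eta_bound k"
  define \<epsilon> where "\<epsilon> = Ck k * x ^ (2*k)"
  have x: "0 < x" "x \<le> 1/4"
    using eta_bound_pos eta_bound_le k by (auto simp: x_def)
  have "0 \<le> \<epsilon>"
    using x Ck_pos[of k] by (simp add: \<epsilon>_def)
  have "\<epsilon> \<le> 1 / (32 * (real k + 1))"
    using Ck_eta_bound_power_le[OF k] by (simp add: \<epsilon>_def x_def)
  also have "\<dots> \<le> 1/32"
    by (intro divide_left_mono) auto
  finally have "\<epsilon> \<le> 1/32" .
  have "(7 + 8 * real k) * x^2 = 1 - x^2"
    unfolding x_def eta_bound_sq by (simp add: field_simps)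
  moreover have "x^2 \<le> x / 4"
    using x by (simp add: power2_eq_square mult_left_mono)
  moreover have "4 * x^(2*k+1) * Ck k * (1 - x - Ck k * x^(2*k+1)) = 4 * x * \<epsilon> * (1 - x - \<epsilon> * x)"
    unfolding \<epsilon>_def by (simp add: algebra_simps)
  moreover have "4 * x * \<epsilon> * (1 - x - \<epsilon> * x) \<le> 4 * x * (1/32) * 1"
  proof (intro mult_mono)
    have "\<epsilon> * x \<le> 1/32 * 1"
      using x \<open>0 \<le> \<epsilon>\<close> \<open>\<epsilon> \<le> 1/32\<close> by (intro mult_mono) auto
    then show "0 \<le> 1 - x - \<epsilon> * x"
      using x by simp
    show "1 - x - \<epsilon> * x \<le> 1"
      using x mult_nonneg_nonneg[OF \<open>0 \<le> \<epsilon>\<close>, of x] by simp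
  qed (use x \<open>0 \<le> \<epsilon>\<close> \<open>\<epsilon> \<le> 1/32\<close> in auto)
  moreover have "discr k (Ck k) x
      = 1 - 2*x - (7 + 8 * real k) * x^2 + 4 * x^(2*k+1) * Ck k * (1 - x - Ck k * x^(2*k+1))"
    by (simp only: discr_def of_nat_numeral)
  ultimately have "discr k (Ck k) x \<le> x / 4 - 2 * x + x / 8"
    by linarith
  also have "\<dots> < 0"
    using x by simp
  finally show ?thesis
    by (simp add: x_def)
qed

lemma eta_root:
  assumes k: "2 \<le> k"
  shows "0 < eta k" "eta k < eta_bound k" "Delta k (eta k) = 0"
proof -
  obtain x where x: "0 \<le> x" "x \<le> eta_bound k" "discr k (Ck k) x = 0"
    using IVT2[of "discr k (Ck k)" "eta_bound k" 0 0] discr_eta_bound_neg[OF k] eta_bound_pos[of k]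
      isCont_discr by auto
  moreover have "x \<noteq> 0" "x \<noteq> eta_bound k"
    using x discr_eta_bound_neg[OF k] by auto
  ultimately have x': "0 < x" "x < eta_bound k"
    by auto
  have "y = x" if "0 < y" "y < eta_bound k" "discr k (Ck k) y = 0" for y
    using discr_strict_antimono[OF k, of y x] discr_strict_antimono[OF k, of x y] that x x'
    by (cases y x rule: linorder_cases) auto
  with x x' have "\<exists>!x. 0 < x \<and> x < 1 / sqrt (8 + 8 * real k) \<and> Delta k x = 0"
    unfolding Delta_eq_discr eta_bound_def[symmetric] by blast
  then have "0 < eta k \<and> eta k < 1 / sqrt (8 + 8 * real k) \<and> Delta k (eta k) = 0"
    unfolding eta_def by (rule theI')
  then show "0 < eta k" "eta k < eta_bound k" "Delta k (eta k) = 0"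
    by (auto simp: eta_bound_def)
qed

lemma deriv_Delta: "deriv (Delta k) e = discr_quot k (Ck k) e e"
proof -
  have "DERIV (Delta k) e :> discr_quot k (Ck k) e e"
    unfolding CARAT_DERIV
    by (rule exI[of _ "discr_quot k (Ck k) e"])
      (auto simp: Delta_eq_discr discr_diff isCont_discr_quot mult.commute)
  then show ?thesis
    by (rule DERIV_imp_deriv)
qed

lemma psi_eq_discr_quot: "psi k = - eta k * discr_quot k (Ck k) (eta k) (eta k)"
  by (simp add: psi_def deriv_Delta)

lemma psi_pos:
  assumes k: "2 \<le> k"
  shows "0 < psi k"
  using discr_quot_neg[OF k, of "eta k" "eta k"] eta_root[OF k]
  by (simp add: psi_eq_discr_quot mult_pos_neg)

section \<open>The square root of the discriminant\<close>

lemma fps_eq_if_square_eq: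
  fixes f g :: "'a::idom fps"
  assumes "f^2 = g^2" "f $ 0 + g $ 0 \<noteq> 0"
  shows "f = g"
proof -
  have "(f - g) * (f + g) = 0"
    using assms(1) by (simp add: power2_eq_square algebra_simps)
  moreover have "f + g \<noteq> 0"
    using assms(2) by (metis fps_add_nth fps_zero_nth)
  ultimately show ?thesis
    by simp
qed

definition sqrt_one_minus_fps :: "complex \<Rightarrow> complex fps" where
  "sqrt_one_minus_fps c = Abs_fps (\<lambda>n. of_real (sqrt_coeff n) * c ^ n)"

lemma sqrt_one_minus_fps_sq: "sqrt_one_minus_fps c ^ 2 = 1 - fps_const c * fps_X"
proof (rule fps_ext)
  fix n
  have "(sqrt_one_minus_fps c ^ 2) $ n = (\<Sum>j\<le>n. of_real (sqrt_coeff j * sqrt_coeff (n - j)) * c ^ n)"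
    unfolding power2_eq_square fps_mult_nth atMost_atLeast0
    by (intro sum.cong refl) (simp add: sqrt_one_minus_fps_def algebra_simps flip: power_add)
  also have "\<dots> = of_real (\<Sum>j\<le>n. sqrt_coeff j * sqrt_coeff (n - j)) * c ^ n"
    by (simp add: sum_distrib_right)
  also have "\<dots> = (1 - fps_const c * fps_X) $ n"
    by (cases "n = 1") (simp_all add: sqrt_coeff_convolution)
  finally show "(sqrt_one_minus_fps c ^ 2) $ n = (1 - fps_const c * fps_X) $ n" .
qed

lemma has_fps_expansion_pow_diff_quot:
  "(\<lambda>z::complex. pow_diff_quot n z e) has_fps_expansion pow_diff_quot n fps_X (fps_const e)"
  unfolding pow_diff_quot_def
  by (rule has_fps_expansion_schematicI, (rule fps_expansion_intros)+) (simp add: fps_const_power)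

lemma has_fps_expansion_discr_quot:
  "(\<lambda>z::complex. discr_quot k c e z) has_fps_expansion discr_quot k (fps_const c) (fps_const e) fps_X"
  unfolding discr_quot_def discr_quot_high_def
  by (rule has_fps_expansion_schematicI, (rule fps_expansion_intros has_fps_expansion_pow_diff_quot)+)
    (simp only: fps_const_add[symmetric] fps_const_mult[symmetric] fps_numeral_fps_const[symmetric]
      fps_of_nat fps_const_neg[symmetric])

context
  fixes k :: nat
  assumes two_le_k: "2 \<le> k"
begin

definition sqrt_radius :: real where
  "sqrt_radius = min (eta_bound k) (eta k + 1 / (7 + 8 * real k))"

text \<open>Delta_k(z) = (1 - z/eta_k) * discr_cofactor z, and discr_cofactor eta_k = psi_k.\<close>
definition discr_cofactor :: "complex \<Rightarrow> complex" where
  "discr_cofactor z = - of_real (eta k) * discr_quot k (of_real (Ck k)) (of_real (eta k)) z"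

definition sqrt_cofactor_fps :: "complex fps" where
  "sqrt_cofactor_fps = fps_expansion (\<lambda>z. csqrt (discr_cofactor z)) 0"

lemma eta_less_sqrt_radius: "eta k < sqrt_radius"
  using eta_root[OF two_le_k] by (simp add: sqrt_radius_def)

lemma Re_discr_cofactor_pos:
  assumes "z \<in> ball 0 sqrt_radius"
  shows "0 < Re (discr_cofactor z)"
proof -
  let ?e = "eta k" and ?V = "discr_quot_high k (of_real (Ck k)) (of_real (eta k)) z"
  have e: "0 < ?e" "?e < eta_bound k"
    using eta_root[OF two_le_k] by auto
  have z: "norm z < eta_bound k" "norm z < ?e + 1 / (7 + 8 * real k)"
    using assms by (auto simp: sqrt_radius_def)
  have "norm ?V \<le> 1/2"
    using e z by (intro norm_discr_quot_high_le two_le_k) auto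
  then have "Re ?V \<le> 1/2"
    using complex_Re_le_cmod order.trans by blast
  moreover have "-1 < (7 + 8 * real k) * (Re z + ?e)"
  proof -
    have "- Re z \<le> norm z"
      using abs_Re_le_cmod[of z] by linarith
    then have "- (1 / (7 + 8 * real k)) < Re z + ?e"
      using z by linarith
    then have "(7 + 8 * real k) * - (1 / (7 + 8 * real k)) < (7 + 8 * real k) * (Re z + ?e)"
      by (intro mult_strict_left_mono) auto
    then show ?thesis
      by simp
  qed
  moreover have "Re (discr_cofactor z) = ?e * (2 + (7 + 8 * real k) * (Re z + ?e) - Re ?V)"
    by (simp add: discr_cofactor_def discr_quot_def algebra_simps)
  ultimately show ?thesis
    using e by simp
qed

lemma holomorphic_sqrt_discr_cofactor:
  "(\<lambda>z. csqrt (discr_cofactor z)) holomorphic_on ball 0 sqrt_radius"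
proof (rule holomorphic_on_csqrt')
  show "discr_cofactor holomorphic_on ball 0 sqrt_radius"
    unfolding discr_cofactor_def discr_quot_def discr_quot_high_def pow_diff_quot_def
    by (intro holomorphic_intros)
  fix z :: complex assume "z \<in> ball 0 sqrt_radius"
  then have "0 < Re (discr_cofactor z)"
    by (rule Re_discr_cofactor_pos)
  then show "discr_cofactor z \<notin> \<real>\<^sub>\<le>\<^sub>0"
    by (auto simp: complex_nonpos_Reals_iff)
qed

lemma sqrt_cofactor_fps_sums:
  "w \<in> ball 0 sqrt_radius \<Longrightarrow> (\<lambda>n. sqrt_cofactor_fps $ n * w ^ n) sums csqrt (discr_cofactor w)"
  using holomorphic_power_series[OF holomorphic_sqrt_discr_cofactor]
  by (simp add: sqrt_cofactor_fps_def fps_expansion_def)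

lemma sqrt_cofactor_fps_sq:
  "sqrt_cofactor_fps ^ 2
     = - fps_const (of_real (eta k)) * discr_quot k (fps_const (of_real (Ck k))) (fps_const (of_real (eta k))) fps_X"
proof -
  have "0 < sqrt_radius"
    using eta_less_sqrt_radius eta_root[OF two_le_k] by linarith
  then have "(\<lambda>z. csqrt (discr_cofactor z)) has_fps_expansion sqrt_cofactor_fps"
    using has_fps_expansion_fps_expansion[OF open_ball _ holomorphic_sqrt_discr_cofactor]
    by (simp add: sqrt_cofactor_fps_def)
  from has_fps_expansion_mult[OF this this]
  have "discr_cofactor has_fps_expansion sqrt_cofactor_fps ^ 2"
    by (simp flip: power2_eq_square)
  moreover have "discr_cofactor has_fps_expansion
      - fps_const (of_real (eta k)) * discr_quot k (fps_const (of_real (Ck k))) (fps_const (of_real (eta k))) fps_X"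
    unfolding discr_cofactor_def fps_const_neg
    by (intro has_fps_expansion_cmult_left has_fps_expansion_discr_quot)
  ultimately show ?thesis
    by (rule fps_expansion_unique_complex)
qed

lemma discr_cofactor_0: "discr_cofactor 0 = 1"
  using discr_diff[of k "of_real (Ck k)" 0 "of_real (eta k) :: complex"] eta_root[OF two_le_k]
  by (simp add: discr_cofactor_def discr_of_real flip: Delta_eq_discr)

lemma discr_cofactor_eta: "discr_cofactor (of_real (eta k)) = of_real (psi k)"
  by (simp add: discr_cofactor_def psi_eq_discr_quot discr_quot_def discr_quot_high_def pow_diff_quot_def)

lemma sqrt_cofactor_fps_0: "sqrt_cofactor_fps $ 0 = 1"
  by (simp add: sqrt_cofactor_fps_def fps_expansion_def discr_cofactor_0)

definition sqrt_discr_fps :: "complex fps" where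
  "sqrt_discr_fps = sqrt_one_minus_fps (of_real (1 / eta k)) * sqrt_cofactor_fps"

lemma sqrt_discr_fps_sq: "sqrt_discr_fps ^ 2 = discr k (fps_const (of_real (Ck k))) fps_X"
proof -
  let ?C = "fps_const (of_real (Ck k)) :: complex fps"
    and ?E = "fps_const (of_real (eta k)) :: complex fps"
  have e: "0 < eta k" "Delta k (eta k) = 0"
    using eta_root[OF two_le_k] by auto
  have "discr k ?C ?E = 0"
    using e(2) by (simp add: discr_fps_const discr_of_real flip: Delta_eq_discr)
  then have "discr k ?C fps_X = (fps_X - ?E) * discr_quot k ?C ?E fps_X"
    using discr_diff[of k ?C fps_X ?E] by simp
  also have "fps_X - ?E = (1 - fps_const (of_real (1 / eta k)) * fps_X) * - ?E"
  proof -
    have "fps_const (of_real (1 / eta k)) * ?E = 1"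
      using e(1) by (simp add: of_real_def flip: fps_const_mult)
    then show ?thesis
      by (simp add: algebra_simps)
  qed
  finally show ?thesis
    unfolding sqrt_discr_fps_def power_mult_distrib sqrt_one_minus_fps_sq sqrt_cofactor_fps_sq
    by (simp add: mult.assoc)
qed

lemma sqrt_discr_fps_eq_ogf:
  "sqrt_discr_fps
     = 1 - fps_X + 2 * fps_const (of_real (Ck k)) * fps_X ^ (2*k+1) - 4 * fps_X * ogf (RE_na_of_size k)"
proof (rule fps_eq_if_square_eq)
  let ?R = "ogf (RE_na_of_size k)" and ?C = "fps_const (of_real (Ck k)) :: complex fps"
  have "?R = of_nat (k + 1) * fps_X + fps_X * ?R + fps_X * ?R^2 + fps_X * (?R - ?C * fps_X ^ (2*k))^2"
    using ogf_RE_na_of_size_eq[of k] ogf_plus_operands[of k] two_le_k by simp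
  from discr_eq_square_if_quadratic[OF this]
  show "sqrt_discr_fps ^ 2 = (1 - fps_X + 2 * ?C * fps_X ^ (2*k+1) - 4 * fps_X * ?R)^2"
    by (simp add: sqrt_discr_fps_sq)
  show "sqrt_discr_fps $ 0 + (1 - fps_X + 2 * ?C * fps_X ^ (2*k+1) - 4 * fps_X * ?R) $ 0 \<noteq> 0"
    by (simp add: sqrt_discr_fps_def sqrt_one_minus_fps_def sqrt_cofactor_fps_0 fps_mult_numeral_left)
qed

lemma coeffR_eq_sqrt_discr_fps_nth:
  assumes "2 * k < n"
  shows "of_nat (coeffR k n) = - sqrt_discr_fps $ Suc n / 4"
  using assms
  by (simp add: sqrt_discr_fps_eq_ogf ogf_RE_na_of_size_nth fps_X_power_nth fps_mult_numeral_left mult.assoc)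

lemma sqrt_discr_fps_nth:
  "sqrt_discr_fps $ n = of_real (sqrt_coeff n * (1 / eta k) ^ n)
     * (\<Sum>j\<le>n. sqrt_cofactor_fps $ j * of_real (eta k) ^ j * of_real (sqrt_coeff (n - j) / sqrt_coeff n))"
proof -
  define e where "e = eta k"
  have "0 < e"
    using eta_root[OF two_le_k] by (simp add: e_def)
  have "sqrt_discr_fps $ n = (\<Sum>j\<le>n. sqrt_one_minus_fps (of_real (1 / e)) $ (n - j) * sqrt_cofactor_fps $ j)"
    unfolding sqrt_discr_fps_def fps_mult_nth atMost_atLeast0 e_def
    by (subst sum.atLeastAtMost_rev) simp
  also have "\<dots> = (\<Sum>j\<le>n. of_real (sqrt_coeff n * (1 / e) ^ n)
      * (sqrt_cofactor_fps $ j * of_real e ^ j * of_real (sqrt_coeff (n - j) / sqrt_coeff n)))"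
  proof (intro sum.cong refl)
    fix j assume "j \<in> {..n}"
    then have "(1 / e) ^ (n - j) = (1 / e) ^ n * e ^ j"
      using \<open>0 < e\<close> by (simp add: power_diff field_simps)
    then have real_eq: "sqrt_coeff (n - j) * (1 / e) ^ (n - j)
        = sqrt_coeff n * (1 / e) ^ n * (e ^ j * (sqrt_coeff (n - j) / sqrt_coeff n))"
      using sqrt_coeff_nonzero[of n] by simp
    have "sqrt_one_minus_fps (of_real (1 / e)) $ (n - j) = of_real (sqrt_coeff (n - j) * (1 / e) ^ (n - j))"
      by (simp add: sqrt_one_minus_fps_def)
    also have "\<dots> = of_real (sqrt_coeff n * (1 / e) ^ n * (e ^ j * (sqrt_coeff (n - j) / sqrt_coeff n)))"
      by (simp only: real_eq)
    finally show "sqrt_one_minus_fps (of_real (1 / e)) $ (n - j) * sqrt_cofactor_fps $ j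
        = of_real (sqrt_coeff n * (1 / e) ^ n)
          * (sqrt_cofactor_fps $ j * of_real e ^ j * of_real (sqrt_coeff (n - j) / sqrt_coeff n))"
      by (simp only: of_real_mult of_real_power mult_ac)
  qed
  finally show ?thesis
    by (simp add: sum_distrib_left e_def)
qed

lemma sqrt_discr_fps_nth_factor_tendsto:
  "(\<lambda>n. \<Sum>j\<le>n. sqrt_cofactor_fps $ j * of_real (eta k) ^ j * of_real (sqrt_coeff (n - j) / sqrt_coeff n))
     \<longlonglongrightarrow> of_real (sqrt (psi k))"
proof -
  define \<theta> where "\<theta> = (eta k + sqrt_radius) / 2"
  define q where "q = eta k / \<theta>"
  have e: "0 < eta k" "eta k < \<theta>" "\<theta> < sqrt_radius"
    using eta_root[OF two_le_k] eta_less_sqrt_radius by (auto simp: \<theta>_def)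
  have q: "0 < q" "q < 1"
    using e by (auto simp: q_def)
  have "summable (\<lambda>j. sqrt_cofactor_fps $ j * of_real \<theta> ^ j)"
    using sqrt_cofactor_fps_sums[of "of_real \<theta>"] e by (auto simp: sums_iff)
  then have "\<forall>\<^sub>F j in sequentially. norm (sqrt_cofactor_fps $ j * of_real \<theta> ^ j) < 1"
    by (intro order_tendstoD(2)[OF tendsto_norm_zero] summable_LIMSEQ_zero) simp_all
  then have "\<forall>\<^sub>F j in sequentially. norm (sqrt_cofactor_fps $ j * of_real (eta k) ^ j) \<le> q ^ j"
  proof eventually_elim
    case (elim j)
    have "norm (sqrt_cofactor_fps $ j * of_real (eta k) ^ j) = norm (sqrt_cofactor_fps $ j * of_real \<theta> ^ j) * q ^ j"
      using e by (simp add: q_def norm_mult norm_power power_divide)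
    also have "\<dots> \<le> 1 * q ^ j"
      using elim q by (intro mult_right_mono) auto
    finally show ?case
      by simp
  qed
  from tendsto_sum_mult_sqrt_coeff_ratio[OF q this]
  have "(\<lambda>n. \<Sum>j\<le>n. sqrt_cofactor_fps $ j * of_real (eta k) ^ j * of_real (sqrt_coeff (n - j) / sqrt_coeff n))
      \<longlonglongrightarrow> (\<Sum>j. sqrt_cofactor_fps $ j * of_real (eta k) ^ j)" .
  also have "(\<Sum>j. sqrt_cofactor_fps $ j * of_real (eta k) ^ j) = csqrt (discr_cofactor (of_real (eta k)))"
    using sqrt_cofactor_fps_sums[of "of_real (eta k)"] e by (simp add: sums_iff)
  also have "\<dots> = of_real (sqrt (psi k))"
    using psi_pos[OF two_le_k] by (simp add: discr_cofactor_eta)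
  finally show ?thesis .
qed

lemma coeffR_asymp_equiv_sqrt_coeff:
  "(\<lambda>n. real (coeffR k n)) \<sim>[at_top] (\<lambda>n. - sqrt (psi k) / 4 * (sqrt_coeff (Suc n) * (1 / eta k) ^ Suc n))"
proof -
  define w where "w n = Re (\<Sum>j\<le>n. sqrt_cofactor_fps $ j * of_real (eta k) ^ j
    * of_real (sqrt_coeff (n - j) / sqrt_coeff n))" for n
  have "w \<longlonglongrightarrow> sqrt (psi k)"
    unfolding w_def using tendsto_Re[OF sqrt_discr_fps_nth_factor_tendsto] by simp
  then have "(\<lambda>n. w (Suc n)) \<sim>[at_top] (\<lambda>_. sqrt (psi k))"
    using psi_pos[OF two_le_k] by (intro tendsto_imp_asymp_equiv_const LIMSEQ_Suc) auto
  then have "(\<lambda>n. - (sqrt_coeff (Suc n) * (1 / eta k) ^ Suc n) / 4 * w (Suc n))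
      \<sim>[at_top] (\<lambda>n. - (sqrt_coeff (Suc n) * (1 / eta k) ^ Suc n) / 4 * sqrt (psi k))"
    by (intro asymp_equiv_mult asymp_equiv_refl)
  moreover have "\<forall>\<^sub>F n in sequentially.
      - (sqrt_coeff (Suc n) * (1 / eta k) ^ Suc n) / 4 * w (Suc n) = real (coeffR k n)"
    using eventually_gt_at_top[of "2 * k"]
  proof eventually_elim
    case (elim n)
    have "complex_of_real (real (coeffR k n)) = - sqrt_discr_fps $ Suc n / 4"
      using coeffR_eq_sqrt_discr_fps_nth[OF elim] by simp
    from arg_cong[OF this, of Re] show ?case
      by (simp add: sqrt_discr_fps_nth w_def)
  qed
  ultimately show ?thesis
    by (rule asymp_equiv_transfer) (simp add: algebra_simps)
qed

end

theorem theorem2: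
  fixes k :: nat
  assumes "k \<ge> 2"
  shows "(\<lambda>n. real (coeffR k n)) \<sim>[at_top]
         (\<lambda>n. sqrt (psi k) / (8 * eta k * sqrt pi) * real n powr (-3/2) * (1 / eta k) ^ n)"
proof -
  let ?c = "- sqrt (psi k) / 4" and ?d = "- 1 / (2 * sqrt pi)"
  have "(\<lambda>n. sqrt_coeff (Suc n)) \<sim>[at_top] (\<lambda>n. ?d * real (Suc n) powr (-3/2))"
    using asymp_equiv_compose'[OF sqrt_coeff_asymp_equiv filterlim_Suc] .
  also have "\<dots> \<sim>[at_top] (\<lambda>n. ?d * real n powr (-3/2))"
    by (intro asymp_equiv_mult asymp_equiv_refl) real_asymp
  finally have sqrt_coeff_Suc_equiv: "(\<lambda>n. sqrt_coeff (Suc n)) \<sim>[at_top] (\<lambda>n. ?d * real n powr (-3/2))" .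
  have "(\<lambda>n. real (coeffR k n)) \<sim>[at_top] (\<lambda>n. ?c * (sqrt_coeff (Suc n) * (1 / eta k) ^ Suc n))"
    using assms by (rule coeffR_asymp_equiv_sqrt_coeff)
  also have "\<dots> \<sim>[at_top] (\<lambda>n. ?c * ((?d * real n powr (-3/2)) * (1 / eta k) ^ Suc n))"
    by (intro asymp_equiv_mult asymp_equiv_refl sqrt_coeff_Suc_equiv)
  also have "sqrt (psi k) / (8 * eta k * sqrt pi) = ?c * ?d * (1 / eta k)"
    by simp
  then have "(\<lambda>n. ?c * ((?d * real n powr (-3/2)) * (1 / eta k) ^ Suc n))
      = (\<lambda>n. sqrt (psi k) / (8 * eta k * sqrt pi) * real n powr (-3/2) * (1 / eta k) ^ n)"
    by (simp only: power_Suc mult_ac)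
  finally show ?thesis .
qed

end
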